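(* There is $k_0$ such that for every $k\geq k_0$ the following holds. Let $G$ be a finite bipartite graph with vertex classes $A$ and $B$ satisfying $\Delta(G)\leq k^7$, $d(G)\geq k/4$, and $d_G(v)\leq k$ for every $v\in A$. Then $G$ contains a subgraph with maximum degree at most $k$ and average degree at least $k/(400\log k)$.
   Context: $d(G)=2e(G)/|V(G)|$ is the average degree, $d_G(v)$ the degree of $v$, $\Delta(G)$ the maximum degree. Logarithms are to base $2$. *)

theory Defs
  imports "HOL-Analysis.Analysis"
begin

definition is_graph :: "'a set \<Rightarrow> 'a set set \<Rightarrow> bool" where
  "is_graph V E \<longleftrightarrow> finite V \<and> (\<forall>e\<in>E. \<exists>u v. u \<in> V \<and> v \<in> V \<and> u \<noteq> v \<and> e = {u, v})"

definition degree :: "'a set set \<Rightarrow> 'a \<Rightarrow> nat" where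
  "degree E v = card {e \<in> E. v \<in> e}"

definition max_degree :: "'a set \<Rightarrow> 'a set set \<Rightarrow> nat" where
  "max_degree V E = Max (insert 0 (degree E ` V))"

definition avg_degree :: "'a set \<Rightarrow> 'a set set \<Rightarrow> real" where
  "avg_degree V E = 2 * real (card E) / real (card V)"

definition is_bipartite_with :: "'a set \<Rightarrow> 'a set set \<Rightarrow> 'a set \<Rightarrow> 'a set \<Rightarrow> bool" where
  "is_bipartite_with V E A B \<longleftrightarrow> A \<union> B = V \<and> A \<inter> B = {} \<and>
     (\<forall>e\<in>E. \<exists>a b. a \<in> A \<and> b \<in> B \<and> e = {a, b})"

definition is_subgraph :: "'a set \<Rightarrow> 'a set set \<Rightarrow> 'a set \<Rightarrow> 'a set set \<Rightarrow> bool" where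
  "is_subgraph V' E' V E \<longleftrightarrow> is_graph V' E' \<and> V' \<subseteq> V \<and> E' \<subseteq> E"

end

theory Submission
  imports Defs "HOL-Library.Discrete_Functions"
begin

(* Only the vertices b of B can have degree above k. Sort them into dyadic classes by
   d(b) in [2^t, 2^(t+1)); as d(b) <= k^7 there are at most 7 log k + 1 classes. For a
   class t, color A with m ~ 2^(t+1)/k colors so that the sum over b and colors j of the
   squared number of neighbors of b of color j is at most its expectation for a random
   coloring; then b keeps, summed over j, at least d(b)/2 edges when it is joined to at
   most k of its neighbors of color j. Every such piece (class t, color j) has maximum
   degree at most k, and the pieces together have at least e(G)/2 edges, while their
   vertex counts sum to at most (7 log k + 2)|V| + 2e(G)/k = O(e(G) log k / k), because
   d(G) >= k/4. So some piece has more than k/(800 log k) times as many edges as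
   vertices. *)

lemma sum_card_fibers:
  fixes c :: "'a \<Rightarrow> nat"
  assumes "finite X" "\<forall>a\<in>X. c a < m"
  shows "(\<Sum>j<m. card {a\<in>X. c a = j}) = card X"
proof -
  have "c ` X \<subseteq> {..<m}" using assms(2) by auto
  from sum.group[OF assms(1) finite_lessThan this, of "\<lambda>_. 1::nat"] show ?thesis by simp
qed

lemma exists_le_average:
  fixes g :: "nat \<Rightarrow> nat"
  assumes "m > 0"
  shows "\<exists>i<m. m * g i \<le> (\<Sum>j<m. g j)"
proof -
  obtain i where i: "i < m" "\<forall>j<m. g i \<le> g j"
    using ex_has_least_nat[of "\<lambda>j. j < m" 0 g] assms by blast
  then have "(\<Sum>j<m. g i) \<le> (\<Sum>j<m. g j)" by (intro sum_mono) auto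
  with i show ?thesis by auto
qed

lemma card_color_class_recolor:
  assumes "finite S" "x \<notin> S"
  shows "card {a \<in> N \<inter> insert x S. (c(x := i)) a = j}
    = card {a \<in> N \<inter> S. c a = j} + (if x \<in> N \<and> j = i then 1 else 0)"
proof (cases "x \<in> N \<and> j = i")
  case True
  then have "{a \<in> N \<inter> insert x S. (c(x := i)) a = j} = insert x {a \<in> N \<inter> S. c a = j}"
    using assms(2) by auto
  then show ?thesis using True assms by simp
next
  case False
  then have "{a \<in> N \<inter> insert x S. (c(x := i)) a = j} = {a \<in> N \<inter> S. c a = j}"
    using assms(2) by auto
  then show ?thesis using False by simp
qed

lemma sum_squares_color_classes_recolor:
  fixes c :: "'a \<Rightarrow> nat"
  assumes "finite C" "finite S" "x \<notin> S" "i < m"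
  shows "(\<Sum>b\<in>C. \<Sum>j<m. card {a \<in> N b \<inter> insert x S. (c(x := i)) a = j}^2)
    = (\<Sum>b\<in>C. \<Sum>j<m. card {a \<in> N b \<inter> S. c a = j}^2)
      + 2 * (\<Sum>b\<in>{b \<in> C. x \<in> N b}. card {a \<in> N b \<inter> S. c a = i}) + card {b \<in> C. x \<in> N b}"
proof -
  have "(\<Sum>j<m. card {a \<in> N b \<inter> insert x S. (c(x := i)) a = j}^2)
      = (\<Sum>j<m. card {a \<in> N b \<inter> S. c a = j}^2)
        + (if x \<in> N b then 2 * card {a \<in> N b \<inter> S. c a = i} + 1 else 0)" for b
  proof -
    have "(\<Sum>j<m. card {a \<in> N b \<inter> insert x S. (c(x := i)) a = j}^2)
        = (\<Sum>j<m. card {a \<in> N b \<inter> S. c a = j}^2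
            + (if x \<in> N b \<and> j = i then 2 * card {a \<in> N b \<inter> S. c a = j} + 1 else 0))"
      unfolding card_color_class_recolor[OF assms(2,3)]
      by (intro sum.cong) (auto simp: power2_eq_square)
    then show ?thesis using \<open>i < m\<close> by (simp add: sum.distrib)
  qed
  then have "(\<Sum>b\<in>C. \<Sum>j<m. card {a \<in> N b \<inter> insert x S. (c(x := i)) a = j}^2)
      = (\<Sum>b\<in>C. (\<Sum>j<m. card {a \<in> N b \<inter> S. c a = j}^2)
          + (if x \<in> N b then 2 * card {a \<in> N b \<inter> S. c a = i} + 1 else 0))"
    by (intro sum.cong refl)
  also have "\<dots> = (\<Sum>b\<in>C. \<Sum>j<m. card {a \<in> N b \<inter> S. c a = j}^2)
      + (\<Sum>b\<in>{b \<in> C. x \<in> N b}. 2 * card {a \<in> N b \<inter> S. c a = i} + 1)"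
    unfolding sum.inter_filter[OF \<open>finite C\<close>] by (rule sum.distrib)
  finally show ?thesis
    by (simp only: sum.distrib sum_constant flip: sum_distrib_left) simp
qed

lemma sum_square_card_insert:
  assumes "finite C" "finite S" "x \<notin> S"
  shows "(\<Sum>b\<in>C. card (N b \<inter> insert x S)^2 + m * card (N b \<inter> insert x S))
    = (\<Sum>b\<in>C. card (N b \<inter> S)^2 + m * card (N b \<inter> S))
      + 2 * (\<Sum>b\<in>{b \<in> C. x \<in> N b}. card (N b \<inter> S)) + card {b \<in> C. x \<in> N b}
      + m * card {b \<in> C. x \<in> N b}"
proof -
  have "card (N b \<inter> insert x S)^2 + m * card (N b \<inter> insert x S)
      = card (N b \<inter> S)^2 + m * card (N b \<inter> S)
        + (if x \<in> N b then 2 * card (N b \<inter> S) + 1 + m else 0)" for b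
    using assms(2,3) by (simp add: Int_insert_right power2_eq_square algebra_simps)
  then have "(\<Sum>b\<in>C. card (N b \<inter> insert x S)^2 + m * card (N b \<inter> insert x S))
      = (\<Sum>b\<in>C. card (N b \<inter> S)^2 + m * card (N b \<inter> S)
          + (if x \<in> N b then 2 * card (N b \<inter> S) + 1 + m else 0))"
    by (intro sum.cong refl)
  also have "\<dots> = (\<Sum>b\<in>C. card (N b \<inter> S)^2 + m * card (N b \<inter> S))
      + (\<Sum>b\<in>{b \<in> C. x \<in> N b}. 2 * card (N b \<inter> S) + 1 + m)"
    unfolding sum.inter_filter[OF \<open>finite C\<close>] by (rule sum.distrib)
  finally show ?thesis
    by (simp only: sum.distrib sum_constant flip: sum_distrib_left) simp
qed

(* For a uniformly random m-coloring the expected left-hand side is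
   sum_b (d_b^2 + (m - 1) d_b), where d_b = card (N b \<inter> S); the induction colors one vertex
   at a time, always with a color minimizing the increase. *)
lemma exists_coloring_sum_squares_le:
  fixes N :: "'b \<Rightarrow> 'a set"
  assumes "finite C" "m > 0" "finite S"
  shows "\<exists>c::'a \<Rightarrow> nat. (\<forall>a. c a < m) \<and>
    m * (\<Sum>b\<in>C. \<Sum>j<m. card {a \<in> N b \<inter> S. c a = j}^2)
      \<le> (\<Sum>b\<in>C. card (N b \<inter> S)^2 + m * card (N b \<inter> S))"
  using \<open>finite S\<close>
proof (induction S rule: finite_induct)
  case empty
  show ?case using \<open>m > 0\<close> by (intro exI[of _ "\<lambda>_. 0"]) simp
next
  case (insert x S)
  obtain c where c: "\<forall>a. c a < m" and IH:
    "m * (\<Sum>b\<in>C. \<Sum>j<m. card {a \<in> N b \<inter> S. c a = j}^2)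
      \<le> (\<Sum>b\<in>C. card (N b \<inter> S)^2 + m * card (N b \<inter> S))"
    using insert.IH by blast
  define old where "old b j = card {a \<in> N b \<inter> S. c a = j}" for b j
  define Cx where "Cx = {b \<in> C. x \<in> N b}"
  obtain i where "i < m" and i: "m * (\<Sum>b\<in>Cx. old b i) \<le> (\<Sum>j<m. \<Sum>b\<in>Cx. old b j)"
    using exists_le_average[OF \<open>m > 0\<close>, of "\<lambda>j. \<Sum>b\<in>Cx. old b j"] by blast
  have "(\<Sum>j<m. \<Sum>b\<in>Cx. old b j) = (\<Sum>b\<in>Cx. card (N b \<inter> S))"
    unfolding old_def using insert.hyps(1) c
    by (subst sum.swap) (intro sum.cong refl sum_card_fibers; auto)
  then have "m * (\<Sum>b\<in>C. \<Sum>j<m. card {a \<in> N b \<inter> insert x S. (c(x := i)) a = j}^2)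
      \<le> (\<Sum>b\<in>C. card (N b \<inter> insert x S)^2 + m * card (N b \<inter> insert x S))"
    using IH i \<open>i < m\<close>
    unfolding sum_squares_color_classes_recolor[OF \<open>finite C\<close> insert.hyps \<open>i < m\<close>]
      sum_square_card_insert[OF \<open>finite C\<close> insert.hyps] old_def Cx_def
    by (simp add: algebra_simps)
  moreover have "\<forall>a. (c(x := i)) a < m" using c \<open>i < m\<close> by simp
  ultimately show ?case by blast
qed

lemma min_ge_sub_square_div:
  fixes x k :: nat
  assumes "k > 0"
  shows "real x - real x^2 / (4 * real k) \<le> real (min x k)"
proof (cases "x \<le> k")
  case True
  then show ?thesis by simp
next
  case False
  have "4 * real k * real x - real x^2 \<le> 4 * real k * real k"
    using zero_le_power2[of "real x - 2 * real k"] by (simp add: power2_eq_square algebra_simps)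
  then have "real x - real x^2 / (4 * real k) \<le> real k"
    using assms by (simp add: field_simps)
  then show ?thesis using False by simp
qed

lemma exists_coloring_keeping_half:
  fixes N :: "'b \<Rightarrow> 'a set"
  assumes "finite C" "finite S" "m > 0" "k > 0"
    and N: "\<forall>b\<in>C. N b \<subseteq> S \<and> card (N b) \<le> m * k"
  shows "\<exists>c::'a \<Rightarrow> nat. (\<forall>a. c a < m) \<and>
    (\<Sum>b\<in>C. real (card (N b))) / 2 \<le> (\<Sum>j<m. \<Sum>b\<in>C. real (min (card {a \<in> N b. c a = j}) k))"
proof -
  define x where "x c b j = card {a \<in> N b. c a = j}" for c :: "'a \<Rightarrow> nat" and b j
  define d where "d b = card (N b)" for b
  obtain c where c: "\<forall>a. c a < m" and sq:
    "m * (\<Sum>b\<in>C. \<Sum>j<m. card {a \<in> N b \<inter> S. c a = j}^2)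
      \<le> (\<Sum>b\<in>C. card (N b \<inter> S)^2 + m * card (N b \<inter> S))"
    using exists_coloring_sum_squares_le[OF \<open>finite C\<close> \<open>m > 0\<close> \<open>finite S\<close>] by blast
  have "N b \<inter> S = N b" if "b \<in> C" for b using N that by blast
  then have "m * (\<Sum>b\<in>C. \<Sum>j<m. x c b j^2) \<le> (\<Sum>b\<in>C. d b^2 + m * d b)"
    using sq by (simp add: x_def d_def cong: sum.cong)
  also have "\<dots> \<le> m * (2 * k * (\<Sum>b\<in>C. d b))"
    unfolding sum_distrib_left
  proof (intro sum_mono)
    fix b assume "b \<in> C"
    then have "d b^2 \<le> m * k * d b"
      using N by (simp add: d_def power2_eq_square)
    moreover have "m * d b \<le> m * k * d b" using \<open>k > 0\<close> by simp
    moreover have "m * (2 * k * d b) = m * k * d b + m * k * d b" by (simp add: algebra_simps)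
    ultimately show "d b^2 + m * d b \<le> m * (2 * k * d b)" by linarith
  qed
  finally have "(\<Sum>b\<in>C. \<Sum>j<m. x c b j^2) \<le> 2 * k * (\<Sum>b\<in>C. d b)"
    using \<open>m > 0\<close> mult_le_cancel1 by blast
  then have squares: "real (\<Sum>b\<in>C. \<Sum>j<m. x c b j^2) \<le> 2 * real k * (\<Sum>b\<in>C. real (d b))"
    by (metis of_nat_le_iff of_nat_mult of_nat_numeral of_nat_sum)
  have sum_x: "(\<Sum>j<m. real (x c b j)) = real (d b)" if "b \<in> C" for b
    using sum_card_fibers[of "N b" c m] N that c \<open>finite S\<close> finite_subset
    unfolding x_def d_def by (metis of_nat_sum)
  have "(\<Sum>b\<in>C. real (d b)) / 2
      \<le> (\<Sum>b\<in>C. real (d b)) - real (\<Sum>b\<in>C. \<Sum>j<m. x c b j^2) / (4 * real k)"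
    using squares \<open>k > 0\<close> by (simp add: field_simps)
  also have "\<dots> = (\<Sum>b\<in>C. \<Sum>j<m. real (x c b j) - real (x c b j)^2 / (4 * real k))"
    using sum_x by (simp add: sum_subtractf sum_divide_distrib)
  also have "\<dots> \<le> (\<Sum>b\<in>C. \<Sum>j<m. real (min (x c b j) k))"
    using \<open>k > 0\<close> by (intro sum_mono min_ge_sub_square_div)
  also have "\<dots> = (\<Sum>j<m. \<Sum>b\<in>C. real (min (x c b j) k))"
    by (rule sum.swap)
  finally show ?thesis using c unfolding x_def d_def by blast
qed

lemma sum_floor_log_classes:
  fixes g :: "'a \<Rightarrow> nat"
  assumes "finite X" "\<forall>b\<in>X. g b < 2 ^ n"
  shows "(\<Sum>t<n. \<Sum>b\<in>{b \<in> X. 0 < g b \<and> floor_log (g b) = t}. f b)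
    = (\<Sum>b\<in>{b \<in> X. 0 < g b}. f b)"
proof -
  have "floor_log (g b) < n" if "b \<in> X" "0 < g b" for b
  proof -
    have "(2::nat) ^ floor_log (g b) < 2 ^ n"
      using floor_log_exp2_le[OF \<open>0 < g b\<close>] assms(2) that(1) by (meson le_less_trans)
    then show ?thesis by simp
  qed
  then have "(\<lambda>b. floor_log (g b)) ` {b \<in> X. 0 < g b} \<subseteq> {..<n}" by auto
  from sum.group[OF _ finite_lessThan this, of f] show ?thesis
    using assms(1) by simp
qed

lemma ex_pos_of_sum_pos:
  fixes f :: "'a \<Rightarrow> real"
  assumes "0 < (\<Sum>i\<in>I. f i)"
  shows "\<exists>i\<in>I. 0 < f i"
  using sum_nonpos[of I f] assms by (meson not_less)

definition stars :: "('a \<Rightarrow> 'a set) \<Rightarrow> 'a set \<Rightarrow> 'a set set" where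
  "stars K C = (\<Union>b\<in>C. (\<lambda>a. {a, b}) ` K b)"

lemma card_stars:
  assumes "finite C" "\<forall>b\<in>C. finite (K b) \<and> K b \<inter> C = {}"
  shows "card (stars K C) = (\<Sum>b\<in>C. card (K b))"
proof -
  have "card (stars K C) = (\<Sum>b\<in>C. card ((\<lambda>a. {a, b}) ` K b))"
    unfolding stars_def
  proof (rule card_UN_disjoint)
    show "\<forall>b\<in>C. \<forall>b'\<in>C. b \<noteq> b' \<longrightarrow> (\<lambda>a. {a, b}) ` K b \<inter> (\<lambda>a. {a, b'}) ` K b' = {}"
      using assms(2) by (auto simp: doubleton_eq_iff; blast)
  qed (use assms in auto)
  also have "\<dots> = (\<Sum>b\<in>C. card (K b))"
    by (intro sum.cong refl card_image) (auto simp: inj_on_def doubleton_eq_iff)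
  finally show ?thesis .
qed

lemma degree_stars_center_le:
  assumes "\<forall>b\<in>C. finite (K b) \<and> K b \<inter> C = {}" "b \<in> C"
  shows "degree (stars K C) b \<le> card (K b)"
proof -
  have "{e \<in> stars K C. b \<in> e} \<subseteq> (\<lambda>a. {a, b}) ` K b"
    using assms by (auto simp: stars_def)
  then have "degree (stars K C) b \<le> card ((\<lambda>a. {a, b}) ` K b)"
    unfolding degree_def using assms by (intro card_mono) auto
  also have "\<dots> \<le> card (K b)"
    using assms by (intro card_image_le) auto
  finally show ?thesis .
qed

lemma max_degree_le:
  assumes "finite V" "\<forall>v\<in>V. degree E v \<le> k"
  shows "max_degree V E \<le> k"
  using assms by (simp add: max_degree_def)

lemma degree_le_max_degree:
  assumes "finite V" "v \<in> V"
  shows "degree E v \<le> max_degree V E"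
  using assms by (simp add: max_degree_def)

locale bipartite_graph =
  fixes V :: "'a set" and E :: "'a set set" and A B :: "'a set"
  assumes graph: "is_graph V E" and bipartite: "is_bipartite_with V E A B"
begin

definition nbr :: "'a \<Rightarrow> 'a set" where
  "nbr b = {a \<in> A. {a, b} \<in> E}"

lemma finite_V: "finite V"
  using graph by (simp add: is_graph_def)

lemma A_Un_B: "A \<union> B = V" and A_Int_B: "A \<inter> B = {}"
  using bipartite by (simp_all add: is_bipartite_with_def)

lemma finite_A: "finite A" and finite_B: "finite B"
  using finite_V A_Un_B by auto

lemma nbr_subset_A: "nbr b \<subseteq> A"
  by (auto simp: nbr_def)

lemma finite_nbr: "finite (nbr b)"
  using finite_A nbr_subset_A by (rule finite_subset[rotated])

lemma E_eq_stars_nbr: "E = stars nbr B"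
proof
  show "E \<subseteq> stars nbr B"
  proof
    fix e assume "e \<in> E"
    then obtain a b where "a \<in> A" "b \<in> B" "e = {a, b}"
      using bipartite by (auto simp: is_bipartite_with_def)
    with \<open>e \<in> E\<close> show "e \<in> stars nbr B" by (auto simp: stars_def nbr_def)
  qed
qed (auto simp: stars_def nbr_def)

lemma finite_E: "finite E"
proof -
  have "E \<subseteq> Pow V" using graph by (auto simp: is_graph_def)
  then show ?thesis using finite_V by (meson finite_Pow_iff finite_subset)
qed

lemma card_E_eq_sum_card_nbr: "card E = (\<Sum>b\<in>B. card (nbr b))"
proof -
  have "card (stars nbr B) = (\<Sum>b\<in>B. card (nbr b))"
    using finite_B finite_nbr nbr_subset_A A_Int_B by (intro card_stars) auto
  then show ?thesis by (simp only: E_eq_stars_nbr[symmetric])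
qed

lemma card_nbr_le_max_degree:
  assumes "b \<in> B"
  shows "card (nbr b) \<le> max_degree V E"
proof -
  have "card (nbr b) = card ((\<lambda>a. {a, b}) ` nbr b)"
    by (intro card_image[symmetric]) (auto simp: inj_on_def doubleton_eq_iff)
  also have "\<dots> \<le> degree E b"
    unfolding degree_def using finite_E by (intro card_mono) (auto simp: nbr_def)
  also have "\<dots> \<le> max_degree V E"
    using finite_V A_Un_B assms by (intro degree_le_max_degree) auto
  finally show ?thesis .
qed

lemma capped_subgraph:
  assumes A_degree: "\<forall>a\<in>A. degree E a \<le> k" and "S \<subseteq> A" "C \<subseteq> B"
  shows "\<exists>E'. is_subgraph (S \<union> C) E' V E \<and> max_degree (S \<union> C) E' \<le> k \<and>
           card E' = (\<Sum>b\<in>C. min (card (nbr b \<inter> S)) k)"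
proof -
  have "\<forall>b. \<exists>K. K \<subseteq> nbr b \<inter> S \<and> card K = min (card (nbr b \<inter> S)) k"
    by (meson min.cobounded1 obtain_subset_with_card_n)
  then obtain K where K: "\<And>b. K b \<subseteq> nbr b \<inter> S" "\<And>b. card (K b) = min (card (nbr b \<inter> S)) k"
    by metis
  have "finite C" "finite S"
    using assms(2,3) finite_A finite_B by (auto intro: finite_subset)
  have K_C: "\<forall>b\<in>C. finite (K b) \<and> K b \<inter> C = {}"
  proof
    fix b
    have "K b \<subseteq> A" "finite (K b)"
      using K(1)[of b] nbr_subset_A[of b] finite_nbr[of b] by (auto intro: finite_subset)
    then show "finite (K b) \<and> K b \<inter> C = {}" using A_Int_B \<open>C \<subseteq> B\<close> by blast
  qed
  have "is_subgraph (S \<union> C) (stars K C) V E"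
    using K(1) A_Int_B A_Un_B assms \<open>finite C\<close> \<open>finite S\<close>
    unfolding is_subgraph_def is_graph_def stars_def nbr_def by blast
  moreover have "degree (stars K C) v \<le> k" if "v \<in> S \<union> C" for v
  proof (cases "v \<in> C")
    case True
    then have "degree (stars K C) v \<le> card (K v)" by (rule degree_stars_center_le[OF K_C])
    then show ?thesis using K(2)[of v] by linarith
  next
    case False
    then have "v \<in> A" using that \<open>S \<subseteq> A\<close> by blast
    have "degree (stars K C) v \<le> degree E v"
      unfolding degree_def using \<open>is_subgraph (S \<union> C) (stars K C) V E\<close> finite_E
      by (intro card_mono) (auto simp: is_subgraph_def)
    then show ?thesis using A_degree \<open>v \<in> A\<close> by fastforce
  qed
  then have "max_degree (S \<union> C) (stars K C) \<le> k"
    using \<open>finite C\<close> \<open>finite S\<close> by (intro max_degree_le) auto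
  moreover have "card (stars K C) = (\<Sum>b\<in>C. min (card (nbr b \<inter> S)) k)"
    using card_stars[OF \<open>finite C\<close> K_C] K(2) by simp
  ultimately show ?thesis by blast
qed

(* Edges minus rho times vertices of the subgraph built in capped_subgraph. *)
definition piece_excess :: "nat \<Rightarrow> real \<Rightarrow> 'a set \<Rightarrow> 'a set \<Rightarrow> real" where
  "piece_excess k \<rho> C S = (\<Sum>b\<in>C. real (min (card (nbr b \<inter> S)) k)) - \<rho> * real (card S + card C)"

lemma dense_subgraph_of_piece:
  assumes "\<forall>a\<in>A. degree E a \<le> k" "S \<subseteq> A" "C \<subseteq> B" "0 < piece_excess k \<rho> C S"
  shows "\<exists>V' E'. is_subgraph V' E' V E \<and> V' \<noteq> {} \<and> max_degree V' E' \<le> k \<and> 2 * \<rho> \<le> avg_degree V' E'"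
proof -
  obtain E' where E': "is_subgraph (S \<union> C) E' V E" "max_degree (S \<union> C) E' \<le> k"
    and card_E': "card E' = (\<Sum>b\<in>C. min (card (nbr b \<inter> S)) k)"
    using capped_subgraph assms(1-3) by blast
  have "card (S \<union> C) = card S + card C"
    using assms(2,3) A_Int_B finite_A finite_B
    by (intro card_Un_disjoint) (auto intro: finite_subset)
  then have "\<rho> * card (S \<union> C) < card E'"
    using assms(4) card_E' by (simp add: piece_excess_def)
  moreover have "S \<union> C \<noteq> {}"
    using assms(4) by (auto simp: piece_excess_def)
  then have "0 < card (S \<union> C)"
    using E'(1) by (auto simp: is_subgraph_def is_graph_def card_gt_0_iff)
  ultimately have "2 * \<rho> \<le> avg_degree (S \<union> C) E'"
    by (simp add: avg_degree_def field_simps)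
  with E' \<open>S \<union> C \<noteq> {}\<close> show ?thesis by blast
qed

definition dyadic_class :: "nat \<Rightarrow> 'a set" where
  "dyadic_class t = {b \<in> B. 0 < card (nbr b) \<and> floor_log (card (nbr b)) = t}"

lemma finite_dyadic_class: "finite (dyadic_class t)"
  using finite_B by (simp add: dyadic_class_def)

lemma card_nbr_dyadic_class:
  assumes "b \<in> dyadic_class t"
  shows "2 ^ t \<le> card (nbr b)" "card (nbr b) < 2 * 2 ^ t"
  using assms floor_log_exp2_le floor_log_exp2_gt by (auto simp: dyadic_class_def)

(* The share of b in the excess of the pieces of its class: at least half of its edges are
   kept, and it lies in at most 2 d(b)/k + 1 pieces. *)
definition credit :: "nat \<Rightarrow> real \<Rightarrow> 'a \<Rightarrow> real" where
  "credit k \<rho> b = real (card (nbr b)) / 2 - \<rho> * (2 * real (card (nbr b)) / k + 1)"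

lemma exists_coloring_of_dyadic_class:
  fixes \<rho> :: real
  assumes "k > 0" "0 \<le> \<rho>"
  shows "\<exists>m (col :: 'a \<Rightarrow> nat). (\<Sum>b\<in>dyadic_class t. credit k \<rho> b) - \<rho> * card A
    \<le> (\<Sum>j<m. piece_excess k \<rho> (dyadic_class t) {a \<in> A. col a = j})"
proof -
  let ?D = "dyadic_class t"
  \<comment> \<open>Enough colors for every b in the class to have at most m k neighbors, yet only
    about 2 d(b)/k + 1 colors per b.\<close>
  define m where "m = 2 * 2 ^ t div k + 1"
  have "card (nbr b) \<le> m * k" if "b \<in> ?D" for b
    using card_nbr_dyadic_class(2)[OF that] dividend_less_div_times[OF \<open>k > 0\<close>, of "2 * 2 ^ t"]
    by (simp add: m_def algebra_simps)
  then obtain col where col: "\<forall>a. col a < m" and kept: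
    "(\<Sum>b\<in>?D. real (card (nbr b))) / 2 \<le> (\<Sum>j<m. \<Sum>b\<in>?D. real (min (card {a \<in> nbr b. col a = j}) k))"
    using exists_coloring_keeping_half[OF finite_dyadic_class finite_A _ \<open>k > 0\<close>, of m t nbr]
      nbr_subset_A by (auto simp: m_def)
  have "real m \<le> 2 * real (card (nbr b)) / k + 1" if "b \<in> ?D" for b
  proof -
    have "real (2 * 2 ^ t div k) \<le> real (2 * 2 ^ t) / k" by (rule of_nat_div_le_of_nat)
    also have "\<dots> \<le> 2 * real (card (nbr b)) / k"
      using card_nbr_dyadic_class(1)[OF that] by (intro divide_right_mono) auto
    finally show ?thesis by (simp add: m_def)
  qed
  then have centers: "real m * card ?D \<le> (\<Sum>b\<in>?D. 2 * real (card (nbr b)) / k + 1)"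
    using sum_mono[of ?D "\<lambda>_. real m" "\<lambda>b. 2 * real (card (nbr b)) / k + 1"]
    by (simp add: mult.commute)
  have "nbr b \<inter> {a \<in> A. col a = j} = {a \<in> nbr b. col a = j}" for b j
    using nbr_subset_A by blast
  then have excess: "(\<Sum>j<m. piece_excess k \<rho> ?D {a \<in> A. col a = j})
      = (\<Sum>j<m. \<Sum>b\<in>?D. real (min (card {a \<in> nbr b. col a = j}) k))
        - \<rho> * ((\<Sum>j<m. real (card {a \<in> A. col a = j})) + real m * card ?D)"
    by (simp add: piece_excess_def sum_subtractf sum.distrib flip: sum_distrib_left)
  have fibers: "(\<Sum>j<m. real (card {a \<in> A. col a = j})) = card A"
    using sum_card_fibers[OF finite_A] col by (simp flip: of_nat_sum)
  have "\<rho> * (real m * card ?D) \<le> \<rho> * (\<Sum>b\<in>?D. 2 * real (card (nbr b)) / k + 1)"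
    using \<open>0 \<le> \<rho>\<close> centers by (rule mult_left_mono[rotated])
  moreover have "(\<Sum>b\<in>?D. credit k \<rho> b)
      = (\<Sum>b\<in>?D. real (card (nbr b))) / 2 - \<rho> * (\<Sum>b\<in>?D. 2 * real (card (nbr b)) / k + 1)"
    by (simp add: credit_def sum_subtractf sum_divide_distrib sum_distrib_left)
  ultimately have "(\<Sum>b\<in>?D. credit k \<rho> b) - \<rho> * card A
      \<le> (\<Sum>j<m. piece_excess k \<rho> ?D {a \<in> A. col a = j})"
    using kept unfolding excess fibers distrib_left by linarith
  then show ?thesis by (intro exI[of _ m] exI[of _ col])
qed

lemma sum_credit_dyadic_classes_ge:
  fixes \<rho> :: real
  assumes "0 \<le> \<rho>" "\<forall>b\<in>B. card (nbr b) < 2 ^ n"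
  shows "card E / 2 - \<rho> * (2 * real (card E) / k + card B)
    \<le> (\<Sum>t<n. \<Sum>b\<in>dyadic_class t. credit k \<rho> b)"
proof -
  let ?B = "{b \<in> B. 0 < card (nbr b)}"
  have "(\<Sum>b\<in>?B. real (card (nbr b))) = (\<Sum>b\<in>B. real (card (nbr b)))"
    using finite_B by (intro sum.mono_neutral_left) auto
  then have sum_B: "(\<Sum>b\<in>?B. real (card (nbr b))) = card E"
    by (simp add: card_E_eq_sum_card_nbr)
  have "(\<Sum>b\<in>?B. credit k \<rho> b)
      = (\<Sum>b\<in>?B. real (card (nbr b))) / 2 - \<rho> * (2 * (\<Sum>b\<in>?B. real (card (nbr b))) / k + card ?B)"
    by (simp add: credit_def sum_subtractf sum.distrib flip: sum_divide_distrib sum_distrib_left)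
  moreover have "\<rho> * card ?B \<le> \<rho> * card B"
    using finite_B \<open>0 \<le> \<rho>\<close> by (intro mult_left_mono) (auto intro: card_mono)
  ultimately have "card E / 2 - \<rho> * (2 * real (card E) / k + card B) \<le> (\<Sum>b\<in>?B. credit k \<rho> b)"
    unfolding sum_B distrib_left by linarith
  also have "\<dots> = (\<Sum>t<n. \<Sum>b\<in>dyadic_class t. credit k \<rho> b)"
    unfolding dyadic_class_def by (rule sum_floor_log_classes[OF finite_B assms(2), symmetric])
  finally show ?thesis .
qed

lemma exists_dense_piece:
  fixes \<rho> :: real
  assumes "k > 0" "0 \<le> \<rho>" "\<forall>b\<in>B. card (nbr b) < 2 ^ n"
    and budget: "\<rho> * (real n * card A + 2 * real (card E) / k + card B) < card E / 2"
  shows "\<exists>S C. S \<subseteq> A \<and> C \<subseteq> B \<and> 0 < piece_excess k \<rho> C S"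
proof -
  have "\<forall>t. \<exists>m (col :: 'a \<Rightarrow> nat). (\<Sum>b\<in>dyadic_class t. credit k \<rho> b) - \<rho> * card A
      \<le> (\<Sum>j<m. piece_excess k \<rho> (dyadic_class t) {a \<in> A. col a = j})"
    using exists_coloring_of_dyadic_class[OF assms(1,2)] by blast
  then obtain m where "\<forall>t. \<exists>col :: 'a \<Rightarrow> nat. (\<Sum>b\<in>dyadic_class t. credit k \<rho> b) - \<rho> * card A
      \<le> (\<Sum>j<m t. piece_excess k \<rho> (dyadic_class t) {a \<in> A. col a = j})"
    by (rule choice[THEN exE])
  then obtain col where piece: "\<forall>t. (\<Sum>b\<in>dyadic_class t. credit k \<rho> b) - \<rho> * card A
      \<le> (\<Sum>j<m t. piece_excess k \<rho> (dyadic_class t) {a \<in> A. col t a = j})"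
    by (rule choice[THEN exE])
  have "0 < (\<Sum>t<n. \<Sum>b\<in>dyadic_class t. credit k \<rho> b) - n * (\<rho> * card A)"
    using sum_credit_dyadic_classes_ge[OF assms(2,3), of k] budget
    by (simp add: distrib_left mult.left_commute)
  also have "\<dots> = (\<Sum>t<n. (\<Sum>b\<in>dyadic_class t. credit k \<rho> b) - \<rho> * card A)"
    by (simp add: sum_subtractf)
  also have "\<dots> \<le> (\<Sum>t<n. \<Sum>j<m t. piece_excess k \<rho> (dyadic_class t) {a \<in> A. col t a = j})"
    using piece by (intro sum_mono) blast
  finally have "0 < (\<Sum>t<n. \<Sum>j<m t. piece_excess k \<rho> (dyadic_class t) {a \<in> A. col t a = j})" .
  from ex_pos_of_sum_pos[OF this] obtain t
    where "0 < (\<Sum>j<m t. piece_excess k \<rho> (dyadic_class t) {a \<in> A. col t a = j})" by blast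
  from ex_pos_of_sum_pos[OF this] obtain j
    where "0 < piece_excess k \<rho> (dyadic_class t) {a \<in> A. col t a = j}" by blast
  moreover have "{a \<in> A. col t a = j} \<subseteq> A" "dyadic_class t \<subseteq> B"
    by (auto simp: dyadic_class_def)
  ultimately show ?thesis by blast
qed

lemma dense_piece_budget:
  assumes "2 \<le> k" "real k / 4 \<le> avg_degree V E"
  shows "real k / (800 * log 2 k)
      * (real (floor_log (k ^ 7) + 1) * card A + 2 * real (card E) / k + card B) < card E / 2"
proof -
  define L where "L = log 2 (real k)"
  define n where "n = real (floor_log (k ^ 7) + 1)"
  have "1 \<le> L" using assms(1) by (simp add: L_def)
  have "real (floor_log (k ^ 7)) \<le> log 2 (real (k ^ 7))"
    using assms(1) by (simp add: floor_log_altdef)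
  then have "n \<le> 7 * L + 1" by (simp add: n_def L_def log_nat_power)
  have "card V \<noteq> 0"
  proof
    assume "card V = 0"
    then have "avg_degree V E = 0" by (simp add: avg_degree_def)
    with assms show False by simp
  qed
  then have V: "real k * card V \<le> 8 * card E"
    using assms(2) by (simp add: avg_degree_def field_simps)
  have "card A \<le> card V" "card B \<le> card V"
    using finite_V A_Un_B by (auto intro: card_mono)
  then have "real k * card A \<le> real k * card V" "real k * card B \<le> real k * card V"
    by (simp_all add: mult_left_mono)
  then have "real k * card A \<le> 8 * card E" "real k * card B \<le> 8 * card E"
    using V by linarith+
  have "real k * (n * card A + 2 * real (card E) / k + card B)
      = n * (real k * card A) + 2 * card E + real k * card B"
    using assms(1) by (simp add: field_simps)
  also have "\<dots> \<le> n * (8 * card E) + 2 * card E + 8 * card E"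
    using \<open>real k * card A \<le> 8 * card E\<close> \<open>real k * card B \<le> 8 * card E\<close>
    by (intro add_mono mult_left_mono) (auto simp: n_def)
  also have "\<dots> = (8 * n + 10) * card E"
    by (simp add: algebra_simps)
  also have "\<dots> \<le> 74 * L * card E"
    using \<open>n \<le> 7 * L + 1\<close> \<open>1 \<le> L\<close> by (intro mult_right_mono) auto
  finally have "real k / (800 * L) * (n * card A + 2 * real (card E) / k + card B)
      \<le> 74 / 800 * card E"
    using \<open>1 \<le> L\<close> by (simp add: field_simps)
  moreover have "0 < real k * card V"
    using assms(1) \<open>card V \<noteq> 0\<close> by simp
  then have "0 < real (card E)"
    using V by simp
  ultimately show ?thesis unfolding n_def L_def by linarith
qed

theorem bounded_degree_subgraph_of_log_density:
  assumes "2 \<le> k" "max_degree V E \<le> k ^ 7" "real k / 4 \<le> avg_degree V E"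
    and A_degree: "\<forall>a\<in>A. degree E a \<le> k"
  shows "\<exists>V' E'. is_subgraph V' E' V E \<and> V' \<noteq> {} \<and> max_degree V' E' \<le> k \<and>
    real k / (400 * log 2 (real k)) \<le> avg_degree V' E'"
proof -
  define \<rho> where "\<rho> = real k / (800 * log 2 k)"
  have "0 < k" "0 \<le> \<rho>" using assms(1) by (auto simp: \<rho>_def)
  have small_classes: "\<forall>b\<in>B. card (nbr b) < 2 ^ (floor_log (k ^ 7) + 1)"
  proof
    fix b assume "b \<in> B"
    have "2 ^ (floor_log (k ^ 7) + 1) = (2::nat) * 2 ^ floor_log (k ^ 7)" by simp
    then show "card (nbr b) < 2 ^ (floor_log (k ^ 7) + 1)"
      using card_nbr_le_max_degree[OF \<open>b \<in> B\<close>] assms(2) floor_log_exp2_gt[of "k ^ 7"] by linarith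
  qed
  have budget:
    "\<rho> * (real (floor_log (k ^ 7) + 1) * card A + 2 * real (card E) / k + card B) < card E / 2"
    using dense_piece_budget[OF assms(1,3)] by (simp only: \<rho>_def)
  obtain S C where "S \<subseteq> A" "C \<subseteq> B" "0 < piece_excess k \<rho> C S"
    using exists_dense_piece[OF \<open>0 < k\<close> \<open>0 \<le> \<rho>\<close> small_classes budget] by blast
  from dense_subgraph_of_piece[OF A_degree this]
  obtain V' E' where "is_subgraph V' E' V E" "V' \<noteq> {}" "max_degree V' E' \<le> k"
    and "2 * \<rho> \<le> avg_degree V' E'"
    by blast
  moreover have "2 * \<rho> = real k / (400 * log 2 (real k))"
    by (simp add: \<rho>_def)
  ultimately show ?thesis by auto
qed

end

theorem lemma9:
  "\<exists>k0::nat. \<forall>k::nat. k \<ge> k0 \<longrightarrow>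
     (\<forall>(V::nat set) E A B.
        is_graph V E \<and> is_bipartite_with V E A B \<and>
        max_degree V E \<le> k ^ 7 \<and>
        avg_degree V E \<ge> real k / 4 \<and>
        (\<forall>v\<in>A. degree E v \<le> k)
        \<longrightarrow> (\<exists>V' E'. is_subgraph V' E' V E \<and> V' \<noteq> {} \<and>
               max_degree V' E' \<le> k \<and>
               avg_degree V' E' \<ge> real k / (400 * log 2 (real k))))"
proof (intro exI[of _ 2] allI impI, elim conjE)
  fix k :: nat and V :: "nat set" and E A B
  assume "2 \<le> k" "is_graph V E" "is_bipartite_with V E A B" "max_degree V E \<le> k ^ 7"
    "real k / 4 \<le> avg_degree V E" "\<forall>v\<in>A. degree E v \<le> k"
  then show "\<exists>V' E'. is_subgraph V' E' V E \<and> V' \<noteq> {} \<and> max_degree V' E' \<le> k \<and>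
      real k / (400 * log 2 (real k)) \<le> avg_degree V' E'"
    using bipartite_graph.bounded_degree_subgraph_of_log_density[of V E A B k]
    by (simp add: bipartite_graph_def)
qed

end
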